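(* In the setting described in the context, let $i\in V$, $j\in N_C(i)$, $W=W_{ij}$ and $Q=W-H\bar H W$. Then for every $\tilde x\in\mathbb{R}^m$, with $Z=H\bar H\tilde x$, we have $QZ=\mathbf{0}_m$.
   Context: Let $V=\{1,\ldots,N\}$, $N\ge 2$, and let $G_I=(V,E_I)$ be a connected undirected graph which is not complete, with adjacency matrix $A$; let $B=A+I_N$. For $i\in V$ let $N_I(i)$ be the set of neighbors of $i$ in $G_I$, $\tilde N_I(i)=N_I(i)\cup\{i\}$, $m_i=\deg_{G_I}(i)+1$, $m=\sum_{i=1}^N m_i$, $\mathbf m=(m_1,\ldots,m_N)^T$. For $i,j\in V$ set $s_{ij}=\sum_{l=1}^{j}B(i,l)+\sum_{r=1}^{i-1}m_r$ (the last sum is $0$ for $i=1$). Let $e_1,\ldots,e_m$ be the standard basis of $\mathbb{R}^m$ and define $E_j^i=e_{s_{ij}}$ if $j\in\tilde N_I(i)$ and $E_j^i=\mathbf{0}_m$ otherwise. Let $H=\big[\sum_{i=1}^N E_1^i,\ldots,\sum_{i=1}^N E_N^i\big]\in\mathbb{R}^{m\times N}$ and $\bar H=\mathrm{diag}(1/m_1,\ldots,1/m_N)H^T\in\mathbb{R}^{N\times m}$. Let $G_C=(V,E_C)$ be a communication graph with $G_m\subseteq G_C\subseteq G_I$, where $G_m$ is a maximal triangle-free spanning subgraph of $G_I$ (a triangle-free spanning subgraph such that adding any edge of $G_I$ not in it creates a triangle); $N_C(i)$ denotes the neighbors of $i$ in $G_C$. For $i,j\in V$ let $\mathrm{ind}(i,j)=\tilde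 N_I(i)\cap\tilde N_I(j)$ and $W_{ij}=I_m-\tfrac12\sum_{l\in \mathrm{ind}(i,j)}(E_l^{i}-E_l^{j})(E_l^{i}-E_l^{j})^T$. *)

theory Defs
  imports "Jordan_Normal_Form.Matrix"
begin

text \<open>Graphs on vertex set V = {1..N} are given by edge relations
  E :: nat \<Rightarrow> nat \<Rightarrow> bool (only pairs in V are relevant).
  Matrix/vector indices are 0-based (JNF), so the paper's basis vector e_k is unit_vec m (k-1)
  and the paper's column j of H is column j-1.\<close>

definition simple_graph :: "nat \<Rightarrow> (nat \<Rightarrow> nat \<Rightarrow> bool) \<Rightarrow> bool" where
  "simple_graph N E \<longleftrightarrow> (\<forall>i j. E i j \<longrightarrow> i \<in> {1..N} \<and> j \<in> {1..N} \<and> i \<noteq> j \<and> E j i)"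

definition connected_graph :: "nat \<Rightarrow> (nat \<Rightarrow> nat \<Rightarrow> bool) \<Rightarrow> bool" where
  "connected_graph N E \<longleftrightarrow> (\<forall>i\<in>{1..N}. \<forall>j\<in>{1..N}. E\<^sup>*\<^sup>* i j)"

definition complete_graph :: "nat \<Rightarrow> (nat \<Rightarrow> nat \<Rightarrow> bool) \<Rightarrow> bool" where
  "complete_graph N E \<longleftrightarrow> (\<forall>i\<in>{1..N}. \<forall>j\<in>{1..N}. i \<noteq> j \<longrightarrow> E i j)"

definition subgraph :: "(nat \<Rightarrow> nat \<Rightarrow> bool) \<Rightarrow> (nat \<Rightarrow> nat \<Rightarrow> bool) \<Rightarrow> bool" where
  "subgraph E1 E2 \<longleftrightarrow> (\<forall>i j. E1 i j \<longrightarrow> E2 i j)"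

definition triangle_free :: "(nat \<Rightarrow> nat \<Rightarrow> bool) \<Rightarrow> bool" where
  "triangle_free E \<longleftrightarrow> \<not> (\<exists>a b c. E a b \<and> E b c \<and> E a c)"

definition maximal_triangle_free_spanning_subgraph ::
  "nat \<Rightarrow> (nat \<Rightarrow> nat \<Rightarrow> bool) \<Rightarrow> (nat \<Rightarrow> nat \<Rightarrow> bool) \<Rightarrow> bool" where
  "maximal_triangle_free_spanning_subgraph N Em EI \<longleftrightarrow>
     simple_graph N Em \<and> subgraph Em EI \<and> triangle_free Em \<and>
     (\<forall>a b. EI a b \<and> \<not> Em a b \<longrightarrow>
        \<not> triangle_free (\<lambda>x y. Em x y \<or> (x = a \<and> y = b) \<or> (x = b \<and> y = a)))"

definition Bmat :: "(nat \<Rightarrow> nat \<Rightarrow> bool) \<Rightarrow> nat \<Rightarrow> nat \<Rightarrow> nat" where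
  "Bmat E i l = (if E i l then 1 else 0) + (if i = l then 1 else 0)"

definition nbrs :: "nat \<Rightarrow> (nat \<Rightarrow> nat \<Rightarrow> bool) \<Rightarrow> nat \<Rightarrow> nat set" where
  "nbrs N E i = {j \<in> {1..N}. E i j}"

definition cnbrs :: "nat \<Rightarrow> (nat \<Rightarrow> nat \<Rightarrow> bool) \<Rightarrow> nat \<Rightarrow> nat set" where
  "cnbrs N E i = insert i (nbrs N E i)"

definition mdeg :: "nat \<Rightarrow> (nat \<Rightarrow> nat \<Rightarrow> bool) \<Rightarrow> nat \<Rightarrow> nat" where
  "mdeg N E i = card (nbrs N E i) + 1"

definition mtot :: "nat \<Rightarrow> (nat \<Rightarrow> nat \<Rightarrow> bool) \<Rightarrow> nat" where
  "mtot N E = (\<Sum>i=1..N. mdeg N E i)"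

definition sidx :: "nat \<Rightarrow> (nat \<Rightarrow> nat \<Rightarrow> bool) \<Rightarrow> nat \<Rightarrow> nat \<Rightarrow> nat" where
  "sidx N E i j = (\<Sum>l=1..j. Bmat E i l) + (\<Sum>r=1..i-1. mdeg N E r)"

definition Evec :: "nat \<Rightarrow> (nat \<Rightarrow> nat \<Rightarrow> bool) \<Rightarrow> nat \<Rightarrow> nat \<Rightarrow> real vec" where
  "Evec N E i j = (if j \<in> cnbrs N E i then unit_vec (mtot N E) (sidx N E i j - 1)
                   else 0\<^sub>v (mtot N E))"

definition Hmat :: "nat \<Rightarrow> (nat \<Rightarrow> nat \<Rightarrow> bool) \<Rightarrow> real mat" where
  "Hmat N E = mat (mtot N E) N (\<lambda>(r, c). \<Sum>i=1..N. Evec N E i (c + 1) $ r)"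

definition Hbar :: "nat \<Rightarrow> (nat \<Rightarrow> nat \<Rightarrow> bool) \<Rightarrow> real mat" where
  "Hbar N E = mat_diag N (\<lambda>k. 1 / real (mdeg N E (k + 1))) * transpose_mat (Hmat N E)"

definition ind :: "nat \<Rightarrow> (nat \<Rightarrow> nat \<Rightarrow> bool) \<Rightarrow> nat \<Rightarrow> nat \<Rightarrow> nat set" where
  "ind N E i j = cnbrs N E i \<inter> cnbrs N E j"

definition outer :: "real vec \<Rightarrow> real mat" where
  "outer v = mat (dim_vec v) (dim_vec v) (\<lambda>(r, c). v $ r * v $ c)"

definition Wmat :: "nat \<Rightarrow> (nat \<Rightarrow> nat \<Rightarrow> bool) \<Rightarrow> nat \<Rightarrow> nat \<Rightarrow> real mat" where
  "Wmat N E i j = 1\<^sub>m (mtot N E) -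
     (1/2) \<cdot>\<^sub>m mat (mtot N E) (mtot N E)
        (\<lambda>(r, c). \<Sum>l\<in>ind N E i j. outer (Evec N E i l - Evec N E j l) $$ (r, c))"

end

theory Submission
  imports Defs
begin

text \<open>Row \<open>s\<^sub>i\<^sub>l\<close> of \<open>H\<close> is the \<open>l\<close>-th unit row and each column of \<open>H\<close> is a sum of distinct unit
  vectors; hence \<open>H\<^sup>T H = diag(m)\<close>, i.e. \<open>Hbar H = I\<close>, so \<open>H Hbar\<close> fixes every \<open>Z = H y\<close>. Such a \<open>Z\<close>
  also satisfies \<open>(E\<^sub>l\<^sup>i - E\<^sub>l\<^sup>j)\<^sup>T Z = y\<^sub>l - y\<^sub>l = 0\<close>, so \<open>W Z = Z\<close>. For \<open>Z = H Hbar x\<close> this gives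
  \<open>Q Z = W Z - H Hbar W Z = Z - Z = 0\<close>.\<close>

abbreviation slot :: "nat \<Rightarrow> (nat \<Rightarrow> nat \<Rightarrow> bool) \<Rightarrow> nat \<Rightarrow> nat \<Rightarrow> nat" where
  "slot N E i k \<equiv> sidx N E i k - 1"

definition block_offset :: "nat \<Rightarrow> (nat \<Rightarrow> nat \<Rightarrow> bool) \<Rightarrow> nat \<Rightarrow> nat" where
  "block_offset N E i = (\<Sum>r=1..i-1. mdeg N E r)"

lemma cnbrs_subset: "i \<in> {1..N} \<Longrightarrow> cnbrs N E i \<subseteq> {1..N}"
  unfolding cnbrs_def nbrs_def by auto

lemma card_cnbrs:
  assumes "simple_graph N E"
  shows "card (cnbrs N E i) = mdeg N E i"
proof -
  have "i \<notin> nbrs N E i" using assms unfolding nbrs_def simple_graph_def by auto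
  then show ?thesis unfolding cnbrs_def mdeg_def by (simp add: nbrs_def)
qed

lemma cnbrs_containing:
  assumes "simple_graph N E" and "a \<in> {1..N}"
  shows "{i\<in>{1..N}. a \<in> cnbrs N E i} = cnbrs N E a"
  using assms unfolding cnbrs_def nbrs_def simple_graph_def by auto

lemma sum_Bmat_eq_card_prefix:
  assumes sg: "simple_graph N E" and i: "i \<in> {1..N}" and k: "k \<le> N"
  shows "(\<Sum>l=1..k. Bmat E i l) = card {l\<in>{1..k}. l \<in> cnbrs N E i}"
proof -
  have "Bmat E i l = (if l \<in> cnbrs N E i then 1 else 0)" if "l \<in> {1..k}" for l
  proof -
    have "E i l \<Longrightarrow> i \<noteq> l" using sg unfolding simple_graph_def by blast
    then show ?thesis using that k unfolding Bmat_def cnbrs_def nbrs_def by auto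
  qed
  then have "(\<Sum>l=1..k. Bmat E i l) = (\<Sum>l=1..k. if l \<in> cnbrs N E i then 1 else 0)"
    by (rule sum.cong[OF refl])
  also have "\<dots> = card {l\<in>{1..k}. l \<in> cnbrs N E i}"
    by (simp add: sum.If_cases Int_def)
  finally show ?thesis .
qed

lemma block_offset_add_mdeg: "1 \<le> i \<Longrightarrow> block_offset N E i + mdeg N E i = (\<Sum>r=1..i. mdeg N E r)"
  by (cases i) (simp_all add: block_offset_def)

lemma block_offset_add_mdeg_le:
  assumes "1 \<le> i" and "i \<le> i'"
  shows "block_offset N E i + mdeg N E i \<le> (\<Sum>r=1..i'. mdeg N E r)"
  using assms by (simp add: block_offset_add_mdeg sum_mono2)

lemma sidx_eq_card_prefix:
  assumes "simple_graph N E" and "i \<in> {1..N}" and "k \<in> cnbrs N E i"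
  shows "sidx N E i k = card {l\<in>{1..k}. l \<in> cnbrs N E i} + block_offset N E i"
  using assms cnbrs_subset[of i N E] sum_Bmat_eq_card_prefix[of N E i k]
  unfolding sidx_def block_offset_def by auto

lemma sidx_in_block:
  assumes sg: "simple_graph N E" and i: "i \<in> {1..N}" and k: "k \<in> cnbrs N E i"
  shows "block_offset N E i < sidx N E i k \<and> sidx N E i k \<le> block_offset N E i + mdeg N E i"
proof -
  let ?P = "{l\<in>{1..k}. l \<in> cnbrs N E i}"
  have "k \<in> ?P" using k cnbrs_subset[OF i, of E] by auto
  then have "0 < card ?P" by (auto simp: card_gt_0_iff)
  moreover have "card ?P \<le> card (cnbrs N E i)"
    using cnbrs_subset[OF i, of E] by (intro card_mono) (auto intro: finite_subset)
  ultimately show ?thesis using sidx_eq_card_prefix[OF assms] card_cnbrs[OF sg] by simp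
qed

lemma slot_less_mtot:
  assumes "simple_graph N E" and "i \<in> {1..N}" and "k \<in> cnbrs N E i"
  shows "slot N E i k < mtot N E"
  using sidx_in_block[OF assms] block_offset_add_mdeg_le[of i N N E] assms(2)
  unfolding mtot_def by auto

lemma sidx_inj:
  assumes sg: "simple_graph N E"
    and i: "i \<in> {1..N}" and k: "k \<in> cnbrs N E i"
    and i': "i' \<in> {1..N}" and k': "k' \<in> cnbrs N E i'"
    and eq: "sidx N E i k = sidx N E i' k'"
  shows "i = i' \<and> k = k'"
proof -
  have earlier_block: "sidx N E a b < sidx N E a' b'"
    if "a \<in> {1..N}" "b \<in> cnbrs N E a" "a' \<in> {1..N}" "b' \<in> cnbrs N E a'" "a < a'" for a b a' b'
  proof -
    have "block_offset N E a + mdeg N E a \<le> block_offset N E a'"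
      using that block_offset_add_mdeg_le[of a "a' - 1" N E] by (simp add: block_offset_def)
    then show ?thesis using sidx_in_block[OF sg that(1,2)] sidx_in_block[OF sg that(3,4)] by auto
  qed
  have "i = i'"
    using earlier_block[OF i k i' k'] earlier_block[OF i' k' i k] eq
    by (cases i i' rule: linorder_cases) auto
  moreover have "k = k'"
  proof (rule ccontr)
    assume "k \<noteq> k'"
    then obtain a b where ab: "{a, b} = {k, k'}" "a < b" by (metis insert_commute linorder_neqE_nat)
    have a: "a \<in> cnbrs N E i" and b: "b \<in> cnbrs N E i"
      using ab k k' \<open>i = i'\<close> by auto
    have "b \<in> {l\<in>{1..b}. l \<in> cnbrs N E i}" using b cnbrs_subset[OF i, of E] by auto
    moreover have "b \<notin> {l\<in>{1..a}. l \<in> cnbrs N E i}" using ab(2) by simp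
    moreover have "{l\<in>{1..a}. l \<in> cnbrs N E i} \<subseteq> {l\<in>{1..b}. l \<in> cnbrs N E i}"
      using ab(2) by auto
    ultimately have "{l\<in>{1..a}. l \<in> cnbrs N E i} \<subset> {l\<in>{1..b}. l \<in> cnbrs N E i}"
      by blast
    then have "card {l\<in>{1..a}. l \<in> cnbrs N E i} < card {l\<in>{1..b}. l \<in> cnbrs N E i}"
      by (intro psubset_card_mono) auto
    moreover have "sidx N E i a = sidx N E i b"
      using ab eq \<open>i = i'\<close> by (auto simp: doubleton_eq_iff)
    ultimately show False using sidx_eq_card_prefix[OF sg i a] sidx_eq_card_prefix[OF sg i b] by simp
  qed
  ultimately show ?thesis ..
qed

lemma Evec_nth:
  assumes "r < mtot N E"
  shows "Evec N E i k $ r = (if k \<in> cnbrs N E i \<and> slot N E i k = r then 1 else 0)"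
  using assms unfolding Evec_def by (auto simp: unit_vec_def)

lemma Evec_carrier: "Evec N E i k \<in> carrier_vec (mtot N E)"
  unfolding Evec_def by auto

lemma Evec_scalar_prod:
  assumes "simple_graph N E" and "i \<in> {1..N}" and "k \<in> cnbrs N E i"
    and "z \<in> carrier_vec (mtot N E)"
  shows "Evec N E i k \<bullet> z = z $ slot N E i k"
  using assms slot_less_mtot[OF assms(1-3)]
  by (simp add: Evec_def scalar_prod_left_unit)

lemma Hmat_carrier: "Hmat N E \<in> carrier_mat (mtot N E) N"
  unfolding Hmat_def by auto

lemma dim_Hmat [simp]: "dim_row (Hmat N E) = mtot N E" "dim_col (Hmat N E) = N"
  unfolding Hmat_def by auto

lemma Hmat_nth:
  assumes "r < mtot N E" and "c < N"
  shows "Hmat N E $$ (r, c) =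
    (\<Sum>i=1..N. if c + 1 \<in> cnbrs N E i \<and> slot N E i (c + 1) = r then 1 else 0)"
  using assms unfolding Hmat_def by (simp add: Evec_nth)

text \<open>Distinct pairs \<open>(i, k)\<close> occupy distinct slots, so row \<open>slot i k\<close> of \<open>H\<close> only sees \<open>E\<^sub>k\<^sup>i\<close>.\<close>
lemma Hmat_slot_row:
  assumes sg: "simple_graph N E" and i: "i \<in> {1..N}" and k: "k \<in> cnbrs N E i" and c: "c < N"
  shows "Hmat N E $$ (slot N E i k, c) = (if c + 1 = k then 1 else 0)"
proof -
  have hit: "(c + 1 \<in> cnbrs N E i' \<and> slot N E i' (c + 1) = slot N E i k) \<longleftrightarrow> i' = i \<and> c + 1 = k"
    if i': "i' \<in> {1..N}" for i'
  proof
    assume *: "c + 1 \<in> cnbrs N E i' \<and> slot N E i' (c + 1) = slot N E i k"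
    then have "sidx N E i' (c + 1) = sidx N E i k"
      using sidx_in_block[OF sg i' conjunct1[OF *]] sidx_in_block[OF sg i k] by linarith
    then show "i' = i \<and> c + 1 = k" using sidx_inj[OF sg i' conjunct1[OF *] i k] by simp
  qed (use k in simp)
  have "Hmat N E $$ (slot N E i k, c) = (\<Sum>i'=1..N. if i' = i \<and> c + 1 = k then 1 else 0)"
    unfolding Hmat_nth[OF slot_less_mtot[OF sg i k] c] using hit by (intro sum.cong) auto
  also have "\<dots> = (if c + 1 = k then 1 else 0)" using i by (simp add: sum.If_cases)
  finally show ?thesis .
qed

lemma Hmat_mult_vec_slot:
  assumes sg: "simple_graph N E" and i: "i \<in> {1..N}" and k: "k \<in> cnbrs N E i"
    and y: "y \<in> carrier_vec N"
  shows "(Hmat N E *\<^sub>v y) $ slot N E i k = y $ (k - 1)"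
proof -
  have "k \<in> {1..N}" using cnbrs_subset[OF i, of E] k by auto
  have "(Hmat N E *\<^sub>v y) $ slot N E i k = (\<Sum>c\<in>{0..<N}. Hmat N E $$ (slot N E i k, c) * y $ c)"
    using slot_less_mtot[OF sg i k] y Hmat_carrier[of N E] by (simp add: scalar_prod_def)
  also have "\<dots> = (\<Sum>c\<in>{0..<N}. if c = k - 1 then y $ c else 0)"
    by (intro sum.cong) (use Hmat_slot_row[OF sg i k] \<open>k \<in> {1..N}\<close> in auto)
  also have "\<dots> = y $ (k - 1)" using \<open>k \<in> {1..N}\<close> by auto
  finally show ?thesis .
qed

lemma Hmat_col_inner:
  assumes sg: "simple_graph N E" and a: "a < N" and b: "b < N"
  shows "(\<Sum>r<mtot N E. Hmat N E $$ (r, a) * Hmat N E $$ (r, b)) =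
    (if a = b then real (mdeg N E (a + 1)) else 0)"
proof -
  let ?H = "Hmat N E" and ?m = "mtot N E"
  let ?hit = "\<lambda>i r. a + 1 \<in> cnbrs N E i \<and> slot N E i (a + 1) = r"
  have per_block: "(\<Sum>r<?m. (if ?hit i r then 1 else 0) * ?H $$ (r, b)) =
      (if a + 1 \<in> cnbrs N E i \<and> a = b then 1 else 0)" if i: "i \<in> {1..N}" for i
  proof (cases "a + 1 \<in> cnbrs N E i")
    case True
    have "(\<Sum>r<?m. (if ?hit i r then 1 else 0) * ?H $$ (r, b)) = ?H $$ (slot N E i (a + 1), b)"
      using slot_less_mtot[OF sg i True] True by (simp add: if_distrib[of "\<lambda>x. x * _"] sum.If_cases)
    then show ?thesis using Hmat_slot_row[OF sg i True b] True by simp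
  qed simp
  have "(\<Sum>r<?m. ?H $$ (r, a) * ?H $$ (r, b)) =
      (\<Sum>r<?m. \<Sum>i=1..N. (if ?hit i r then 1 else 0) * ?H $$ (r, b))"
    using a by (intro sum.cong) (auto simp: Hmat_nth sum_distrib_right)
  also have "\<dots> = (\<Sum>i=1..N. if a + 1 \<in> cnbrs N E i \<and> a = b then 1 else 0)"
    using per_block by (subst sum.swap) (rule sum.cong, auto)
  also have "\<dots> = (if a = b then real (card {i\<in>{1..N}. a + 1 \<in> cnbrs N E i}) else 0)"
    by (simp add: sum.If_cases Int_def)
  also have "\<dots> = (if a = b then real (mdeg N E (a + 1)) else 0)"
    using cnbrs_containing[OF sg, of "a + 1"] card_cnbrs[OF sg] a by (cases "a = b") simp_all
  finally show ?thesis .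
qed

lemma Hbar_eq: "Hbar N E = mat N (mtot N E) (\<lambda>(a, r). 1 / real (mdeg N E (a + 1)) * Hmat N E $$ (r, a))"
  unfolding Hbar_def
  by (subst mat_diag_mult_left[of _ N "mtot N E"]) (auto simp: Hmat_carrier intro!: eq_matI)

lemma Hbar_carrier: "Hbar N E \<in> carrier_mat N (mtot N E)"
  unfolding Hbar_eq by auto

lemma Hbar_mult_Hmat:
  assumes sg: "simple_graph N E"
  shows "Hbar N E * Hmat N E = 1\<^sub>m N"
proof (rule eq_matI)
  fix a b assume "a < dim_row (1\<^sub>m N :: real mat)" "b < dim_col (1\<^sub>m N :: real mat)"
  then have a: "a < N" and b: "b < N" by auto
  have "(Hbar N E * Hmat N E) $$ (a, b) =
      (\<Sum>r<mtot N E. Hmat N E $$ (r, a) * Hmat N E $$ (r, b)) / real (mdeg N E (a + 1))"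
    using a b Hmat_carrier[of N E]
    by (auto simp: Hbar_eq scalar_prod_def sum_divide_distrib atLeast0LessThan intro!: sum.cong)
  also have "\<dots> = 1\<^sub>m N $$ (a, b)"
    using a b by (simp add: Hmat_col_inner[OF sg a b] mdeg_def)
  finally show "(Hbar N E * Hmat N E) $$ (a, b) = 1\<^sub>m N $$ (a, b)" .
qed (use Hmat_carrier[of N E] Hbar_carrier[of N E] in auto)

lemma smult_mat_mult_mat_vec:
  fixes A :: "'a :: comm_ring mat"
  assumes "A \<in> carrier_mat nr nc" and "v \<in> carrier_vec nc"
  shows "(k \<cdot>\<^sub>m A) *\<^sub>v v = k \<cdot>\<^sub>v (A *\<^sub>v v)"
  using assms by (intro eq_vecI) auto

lemma mat_sum_outer_mult_vec_orthogonal: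
  fixes d :: "'b \<Rightarrow> real vec"
  assumes d: "\<And>l. l \<in> L \<Longrightarrow> d l \<in> carrier_vec n" and z: "z \<in> carrier_vec n"
    and orth: "\<And>l. l \<in> L \<Longrightarrow> d l \<bullet> z = 0"
  shows "mat n n (\<lambda>(r, c). \<Sum>l\<in>L. outer (d l) $$ (r, c)) *\<^sub>v z = 0\<^sub>v n"
proof (rule eq_vecI)
  fix r assume "r < dim_vec (0\<^sub>v n :: real vec)"
  then have r: "r < n" by simp
  have dim: "dim_vec (d l) = n" if "l \<in> L" for l using d[OF that] by simp
  have "(mat n n (\<lambda>(r, c). \<Sum>l\<in>L. outer (d l) $$ (r, c)) *\<^sub>v z) $ r =
      (\<Sum>c<n. (\<Sum>l\<in>L. d l $ r * d l $ c) * z $ c)"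
    using r z by (auto simp: scalar_prod_def outer_def atLeast0LessThan dim intro!: sum.cong)
  also have "\<dots> = (\<Sum>l\<in>L. d l $ r * (d l \<bullet> z))"
    using z by (simp add: scalar_prod_def atLeast0LessThan sum_distrib_left sum_distrib_right
        mult.assoc sum.swap[of _ "{..<n}"])
  also have "\<dots> = 0" using orth by simp
  finally show "(mat n n (\<lambda>(r, c). \<Sum>l\<in>L. outer (d l) $$ (r, c)) *\<^sub>v z) $ r = 0\<^sub>v n $ r"
    using r by simp
qed simp

lemma Wmat_mult_Hmat_vec:
  assumes sg: "simple_graph N E" and i: "i \<in> {1..N}" and j: "j \<in> {1..N}"
    and y: "y \<in> carrier_vec N"
  shows "Wmat N E i j *\<^sub>v (Hmat N E *\<^sub>v y) = Hmat N E *\<^sub>v y"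
proof -
  let ?m = "mtot N E" and ?Z = "Hmat N E *\<^sub>v y" and ?d = "\<lambda>l. Evec N E i l - Evec N E j l"
  let ?M = "mat ?m ?m (\<lambda>(r, c). \<Sum>l\<in>ind N E i j. outer (?d l) $$ (r, c))"
  have Z: "?Z \<in> carrier_vec ?m" using Hmat_carrier[of N E] y by auto
  have "?d l \<bullet> ?Z = 0" if "l \<in> ind N E i j" for l
  proof -
    have li: "l \<in> cnbrs N E i" and lj: "l \<in> cnbrs N E j" using that unfolding ind_def by auto
    show ?thesis
      using Evec_scalar_prod[OF sg i li Z] Evec_scalar_prod[OF sg j lj Z]
        Hmat_mult_vec_slot[OF sg i li y] Hmat_mult_vec_slot[OF sg j lj y]
      by (simp add: minus_scalar_prod_distrib[OF Evec_carrier Evec_carrier Z])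
  qed
  then have "?M *\<^sub>v ?Z = 0\<^sub>v ?m"
    using Z by (intro mat_sum_outer_mult_vec_orthogonal) (auto simp: Evec_carrier)
  moreover have "((1/2) \<cdot>\<^sub>m ?M) *\<^sub>v ?Z = (1/2) \<cdot>\<^sub>v (?M *\<^sub>v ?Z)"
    by (rule smult_mat_mult_mat_vec[of _ ?m, OF _ Z]) simp
  ultimately have "((1/2) \<cdot>\<^sub>m ?M) *\<^sub>v ?Z = 0\<^sub>v ?m" by (auto intro!: eq_vecI)
  then show ?thesis
    using Z by (simp add: Wmat_def minus_mult_distrib_mat_vec[of _ ?m ?m])
qed

lemma Hmat_Hbar_mult_Hmat_vec:
  assumes "simple_graph N E" and "y \<in> carrier_vec N"
  shows "Hmat N E * Hbar N E *\<^sub>v (Hmat N E *\<^sub>v y) = Hmat N E *\<^sub>v y"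
  using assms Hmat_carrier[of N E] Hbar_carrier[of N E]
  by (simp add: assoc_mult_mat_vec[symmetric, of _ N "mtot N E"] Hbar_mult_Hmat
      assoc_mult_mat_vec[of _ "mtot N E" N])

lemma minus_mult_mat_vec_common_fixpoint:
  fixes W P :: "'a :: ring mat"
  assumes W: "W \<in> carrier_mat n n" and P: "P \<in> carrier_mat n n" and z: "z \<in> carrier_vec n"
    and Wz: "W *\<^sub>v z = z" and Pz: "P *\<^sub>v z = z"
  shows "(W - P * W) *\<^sub>v z = 0\<^sub>v n"
proof -
  have "(W - P * W) *\<^sub>v z = W *\<^sub>v z - P *\<^sub>v (W *\<^sub>v z)"
    using W P z by (simp add: minus_mult_distrib_mat_vec[of _ n n] assoc_mult_mat_vec[of _ n n])
  then show ?thesis using Wz Pz z by simp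
qed

theorem lemma4:
  fixes N :: nat and EI Em EC :: "nat \<Rightarrow> nat \<Rightarrow> bool" and i j :: nat and x :: "real vec"
  assumes "N \<ge> 2"
    and "simple_graph N EI" and "connected_graph N EI" and "\<not> complete_graph N EI"
    and "maximal_triangle_free_spanning_subgraph N Em EI"
    and "simple_graph N EC" and "subgraph Em EC" and "subgraph EC EI"
    and "i \<in> {1..N}" and "j \<in> nbrs N EC i"
    and "x \<in> carrier_vec (mtot N EI)"
  shows "let W = Wmat N EI i j;
             Q = W - Hmat N EI * Hbar N EI * W;
             Z = Hmat N EI * Hbar N EI *\<^sub>v x
         in Q *\<^sub>v Z = 0\<^sub>v (mtot N EI)"
proof -
  let ?m = "mtot N EI" and ?H = "Hmat N EI" and ?B = "Hbar N EI"
  have sg: "simple_graph N EI" and i: "i \<in> {1..N}" and x: "x \<in> carrier_vec ?m" by fact+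
  have j: "j \<in> {1..N}" using \<open>j \<in> nbrs N EC i\<close> unfolding nbrs_def by simp
  define y where "y = ?B *\<^sub>v x"
  have y: "y \<in> carrier_vec N" unfolding y_def using Hbar_carrier[of N EI] x by auto
  have Z: "?H * ?B *\<^sub>v x = ?H *\<^sub>v y"
    unfolding y_def using Hmat_carrier Hbar_carrier x by (rule assoc_mult_mat_vec)
  have "(Wmat N EI i j - ?H * ?B * Wmat N EI i j) *\<^sub>v (?H *\<^sub>v y) = 0\<^sub>v ?m"
    using Hmat_carrier[of N EI] Hbar_carrier[of N EI] y
    by (intro minus_mult_mat_vec_common_fixpoint Wmat_mult_Hmat_vec[OF sg i j y]
        Hmat_Hbar_mult_Hmat_vec[OF sg y]) (auto simp: Wmat_def)
  then show ?thesis using Z by (simp add: Let_def)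
qed

end
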